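(* Let $a,b$ be independent indeterminates over $\mathbb Q$ and $\mathbb Q_{a,b}:=\mathbb Q(a,b)$. The point $P_0=(-4db,\,4d^2)$ lies on $E_{a,b}$ and has infinite order in the Mordell–Weil group $E_{a,b}(\mathbb Q_{a,b})$.
   Context: $d=d(a,b):=-4b^3+(a^2-30a+1)b^2+2a(3a+1)(4a-7)b-a(4a^4-4a^3-40a^2+91a-4)$. $E_{a,b}$ is the elliptic curve over $\mathbb Q(a,b)$ given by $y^2=x^3+d(a^2-30a+1)x^2-8d^2a(3a+1)(4a-7)x-16d^3a(4a^4-4a^3-40a^2+91a-4)$. *)

theory Defs
  imports "HOL-Computational_Algebra.Polynomial" "HOL-Computational_Algebra.Fraction_Field"
begin

text \<open>The field Q(a,b) of rational functions in two independent indeterminates,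
  realised as the fraction field of Q[b][a] = rat poly poly.\<close>
type_synonym Qab = "rat poly poly fract"

definition var_a :: Qab where "var_a = Fract (monom 1 1) 1"
definition var_b :: Qab where "var_b = Fract [:monom 1 1:] 1"

datatype 'f ecpoint = Infinity | Pt 'f 'f

definition on_curve :: "'f::field \<Rightarrow> 'f \<Rightarrow> 'f \<Rightarrow> 'f ecpoint \<Rightarrow> bool" where
  "on_curve A B C P = (case P of Infinity \<Rightarrow> True
     | Pt x y \<Rightarrow> y^2 = x^3 + A * x^2 + B * x + C)"

text \<open>Standard chord-and-tangent group law (a1 = a3 = 0, a2 = A, a4 = B, a6 = C).\<close>
fun ec_add :: "'f::field \<Rightarrow> 'f \<Rightarrow> 'f \<Rightarrow> 'f ecpoint \<Rightarrow> 'f ecpoint \<Rightarrow> 'f ecpoint" where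
  "ec_add A B C Infinity Q = Q"
| "ec_add A B C P Infinity = P"
| "ec_add A B C (Pt x1 y1) (Pt x2 y2) =
     (if x1 = x2 \<and> y1 = - y2 then Infinity
      else let l = (if x1 = x2 then (3 * x1^2 + 2 * A * x1 + B) / (2 * y1)
                    else (y2 - y1) / (x2 - x1));
               x3 = l^2 - A - x1 - x2
           in Pt x3 (- (l * (x3 - x1) + y1)))"

fun ec_mult :: "'f::field \<Rightarrow> 'f \<Rightarrow> 'f \<Rightarrow> nat \<Rightarrow> 'f ecpoint \<Rightarrow> 'f ecpoint" where
  "ec_mult A B C 0 P = Infinity"
| "ec_mult A B C (Suc n) P = ec_add A B C P (ec_mult A B C n P)"

definition dd :: "'f::field \<Rightarrow> 'f \<Rightarrow> 'f" where
  "dd a b = -4 * b^3 + (a^2 - 30*a + 1) * b^2 + 2*a*(3*a+1)*(4*a-7)*b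
            - a*(4*a^4 - 4*a^3 - 40*a^2 + 91*a - 4)"

definition EA :: "'f::field \<Rightarrow> 'f \<Rightarrow> 'f" where
  "EA a b = dd a b * (a^2 - 30*a + 1)"
definition EB :: "'f::field \<Rightarrow> 'f \<Rightarrow> 'f" where
  "EB a b = - 8 * (dd a b)^2 * a * (3*a+1) * (4*a-7)"
definition EC :: "'f::field \<Rightarrow> 'f \<Rightarrow> 'f" where
  "EC a b = - 16 * (dd a b)^3 * a * (4*a^4 - 4*a^3 - 40*a^2 + 91*a - 4)"

end

theory Submission
  imports Defs
begin

(* Measure elements of Q(a,b) by their degree in b (minus the valuation at
   b = infinity).  Since d = -4 b^3 + O(b^2), the point P0 has coordinates
   x0 = 16 b^4 + O(b^3) and y0 = 64 b^6 + O(b^5), while the coefficients satisfy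
   A = O(b^3) and B = O(b^6).  To leading order in b the curve is therefore the cuspidal
   cubic y^2 = x^3, on whose smooth points the chord-tangent law is the additive group.
   Concretely, call a point "near the cusp with parameter s" if x = 16 b^4 / s^2 + O(b^3)
   and y = 64 b^6 / s^3 + O(b^5).  Adding two such points with parameters s <> t, or
   doubling one (t = s), yields a point near the cusp with parameter s + t.  By induction
   n P0 is near the cusp with parameter n, hence affine and never the point at infinity. *)


lemma map_poly_add_hom:
  assumes "f 0 = 0" "\<And>x y. f (x + y) = f x + f y"
  shows "map_poly f (p + q) = map_poly f p + map_poly f q"
  by (intro poly_eqI) (simp add: assms coeff_map_poly)

lemma map_poly_mult_hom:
  fixes f :: "'a::comm_ring_1 \<Rightarrow> 'b::comm_ring_1"
  assumes zero: "f 0 = 0" and add: "\<And>x y. f (x + y) = f x + f y"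
    and mult: "\<And>x y. f (x * y) = f x * f y"
  shows "map_poly f (p * q) = map_poly f p * map_poly f q"
proof (induction p)
  case 0
  show ?case by simp
next
  case (pCons c p)
  have "map_poly f (pCons c p * q) = map_poly f (smult c q + pCons 0 (p * q))"
    by (simp add: mult_pCons_left)
  also have "\<dots> = smult (f c) (map_poly f q) + pCons 0 (map_poly f p * map_poly f q)"
    by (simp add: map_poly_add_hom[of f, OF zero add] map_poly_smult[of f, OF zero mult]
        map_poly_pCons[of f, OF zero] pCons.IH zero)
  also have "\<dots> = map_poly f (pCons c p) * map_poly f q"
    by (simp add: map_poly_pCons[of f, OF zero] mult_pCons_left)
  finally show ?case .
qed


(* Swapping variables: an element of R[y][x] is mapped to R[x][y].  lift_coeffs embeds
   R[y] into R[x][y] (as polynomials in y with constant coefficients), and the outer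
   variable x is then evaluated at the constant [:[:0, 1:]:]. *)
definition lift_coeffs :: "'a::comm_ring_1 poly \<Rightarrow> 'a poly poly" where
  "lift_coeffs c = map_poly (\<lambda>r. [:r:]) c"

definition swap_poly :: "'a::comm_ring_1 poly poly \<Rightarrow> 'a poly poly" where
  "swap_poly p = poly (map_poly lift_coeffs p) [:[:0, 1:]:]"

lemma lift_coeffs_0 [simp]: "lift_coeffs 0 = 0"
  by (simp add: lift_coeffs_def)

lemma lift_coeffs_1 [simp]: "lift_coeffs 1 = 1"
  by (simp add: lift_coeffs_def)

lemma lift_coeffs_pCons: "lift_coeffs (pCons r c) = pCons [:r:] (lift_coeffs c)"
  by (simp add: lift_coeffs_def map_poly_pCons)

lemma lift_coeffs_add: "lift_coeffs (c + e) = lift_coeffs c + lift_coeffs e"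
  unfolding lift_coeffs_def by (rule map_poly_add_hom) auto

lemma lift_coeffs_mult: "lift_coeffs (c * e) = lift_coeffs c * lift_coeffs e"
  unfolding lift_coeffs_def by (rule map_poly_mult_hom) auto

lemma swap_poly_add: "swap_poly (p + q) = swap_poly p + swap_poly q"
  unfolding swap_poly_def by (simp add: map_poly_add_hom lift_coeffs_add)

lemma swap_poly_mult: "swap_poly (p * q) = swap_poly p * swap_poly q"
  unfolding swap_poly_def by (simp add: map_poly_mult_hom lift_coeffs_add lift_coeffs_mult)

lemma swap_poly_0 [simp]: "swap_poly 0 = 0"
  by (simp add: swap_poly_def)

lemma swap_poly_1 [simp]: "swap_poly 1 = 1"
  by (simp add: swap_poly_def)

lemma swap_poly_pCons: "swap_poly (pCons c p) = lift_coeffs c + smult [:0, 1:] (swap_poly p)"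
  unfolding swap_poly_def by (simp add: map_poly_pCons)

lemma swap_poly_const: "swap_poly [:c:] = lift_coeffs c"
  using swap_poly_pCons[of c 0] by (simp add: swap_poly_def)

lemma swap_poly_lift_coeffs: "swap_poly (lift_coeffs c) = [:c:]"
proof (induction c)
  case 0
  show ?case by (simp add: swap_poly_def)
next
  case (pCons r c)
  show ?case
    by (simp add: lift_coeffs_pCons swap_poly_pCons pCons.IH)
qed

lemma swap_poly_swap_poly [simp]: "swap_poly (swap_poly p) = p"
proof (induction p)
  case 0
  show ?case by (simp add: swap_poly_def)
next
  case (pCons c p)
  have "swap_poly (smult [:0, 1:] q) = pCons 0 (swap_poly q)" for q :: "'a poly poly"
    using swap_poly_mult[of "[:[:0, 1:]:]" q]
    by (simp add: swap_poly_const lift_coeffs_pCons one_pCons[symmetric])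
  then show ?case
    by (simp add: swap_poly_pCons swap_poly_add swap_poly_lift_coeffs pCons.IH)
qed

lemma swap_poly_eq_0_iff [simp]: "swap_poly p = 0 \<longleftrightarrow> p = 0"
  by (metis swap_poly_swap_poly swap_poly_def map_poly_0 poly_0)

definition inner_degree :: "'a::comm_ring_1 poly poly \<Rightarrow> nat" where
  "inner_degree p = degree (swap_poly p)"

lemma inner_degree_mult:
  fixes p q :: "'a::idom poly poly"
  shows "p \<noteq> 0 \<Longrightarrow> q \<noteq> 0 \<Longrightarrow> inner_degree (p * q) = inner_degree p + inner_degree q"
  by (simp add: inner_degree_def swap_poly_mult degree_mult_eq)

lemma inner_degree_add: "inner_degree (p + q) \<le> max (inner_degree p) (inner_degree q)"
  unfolding inner_degree_def swap_poly_add by (rule degree_add_le) auto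

lemma inner_degree_1 [simp]: "inner_degree 1 = 0"
  by (simp add: inner_degree_def)

lemma inner_degree_uminus [simp]: "inner_degree (- p) = inner_degree p"
proof -
  have "swap_poly (- p) = - swap_poly p"
    using swap_poly_add[of p "- p"] by (metis add.right_inverse minus_unique swap_poly_0)
  then show ?thesis by (simp add: inner_degree_def)
qed

lemma inner_degree_const: "inner_degree [:[:c:]:] = 0"
  by (simp add: inner_degree_def swap_poly_const lift_coeffs_def map_poly_pCons)

lemma inner_degree_inner_var: "inner_degree [:monom 1 1:] = 1"
  by (simp add: inner_degree_def swap_poly_const lift_coeffs_def monom_altdef map_poly_pCons)

lemma inner_degree_outer_var: "inner_degree (monom 1 1) = 0"
  by (simp add: inner_degree_def monom_altdef swap_poly_pCons)


(* The degree valuation on the fraction field: vdeg (p / q) = deg p - deg q, degrees taken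
   in the inner variable (and vdeg 0 = 0 by convention). *)
lift_definition vdeg :: "'a::idom poly poly fract \<Rightarrow> int" is
  "\<lambda>x. if fst x = 0 then 0 else int (inner_degree (fst x)) - int (inner_degree (snd x))"
proof -
  fix x y :: "'a poly poly \<times> 'a poly poly"
  assume "fractrel x y"
  then obtain p q r s where xy: "x = (p, q)" "y = (r, s)" "q \<noteq> 0" "s \<noteq> 0" "p * s = r * q"
    by (cases x, cases y) auto
  then show "(if fst x = 0 then 0 else int (inner_degree (fst x)) - int (inner_degree (snd x))) =
             (if fst y = 0 then 0 else int (inner_degree (fst y)) - int (inner_degree (snd y)))"
    using inner_degree_mult[of p s] inner_degree_mult[of r q] by auto
qed

lemma vdeg_Fract: "q \<noteq> 0 \<Longrightarrow>
    vdeg (Fract p q) = (if p = 0 then 0 else int (inner_degree p) - int (inner_degree q))"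
  by transfer simp

lemma vdeg_0 [simp]: "vdeg 0 = 0"
  by (simp add: Zero_fract_def vdeg_Fract)

lemma vdeg_1 [simp]: "vdeg 1 = 0"
  by (simp add: One_fract_def vdeg_Fract)

lemma vdeg_mult:
  assumes "z \<noteq> 0" "w \<noteq> 0" shows "vdeg (z * w) = vdeg z + vdeg w"
proof -
  obtain p q where z: "z = Fract p q" "q \<noteq> 0" "p \<noteq> 0"
    using assms(1) by (cases z rule: Fract_cases_nonzero) auto
  obtain r s where w: "w = Fract r s" "s \<noteq> 0" "r \<noteq> 0"
    using assms(2) by (cases w rule: Fract_cases_nonzero) auto
  show ?thesis using z w by (simp add: vdeg_Fract inner_degree_mult)
qed

lemma vdeg_power: "z \<noteq> 0 \<Longrightarrow> vdeg (z ^ n) = int n * vdeg z"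
  by (induction n) (simp_all add: vdeg_mult algebra_simps)

lemma vdeg_inverse: "vdeg (inverse z) = - vdeg z"
  by (cases z rule: Fract_cases_nonzero) (simp_all add: vdeg_Fract)

lemma vdeg_uminus: "vdeg (- z) = vdeg z"
  by (cases z) (simp add: vdeg_Fract)

lemma vdeg_add:
  assumes "z \<noteq> 0" "w \<noteq> 0" "z + w \<noteq> 0" shows "vdeg (z + w) \<le> max (vdeg z) (vdeg w)"
proof -
  obtain p q where z: "z = Fract p q" "q \<noteq> 0" "p \<noteq> 0"
    using assms(1) by (cases z rule: Fract_cases_nonzero) auto
  obtain r s where w: "w = Fract r s" "s \<noteq> 0" "r \<noteq> 0"
    using assms(2) by (cases w rule: Fract_cases_nonzero) auto
  have sum: "p * s + r * q \<noteq> 0" using assms(3) z w by (auto simp: fract_collapse)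
  have "vdeg (z + w) = int (inner_degree (p * s + r * q)) - int (inner_degree (q * s))"
    using z w sum by (simp add: vdeg_Fract)
  also have "\<dots> \<le> max (int (inner_degree (p * s))) (int (inner_degree (r * q)))
                    - int (inner_degree (q * s))"
    using inner_degree_add[of "p * s" "r * q"] by simp
  also have "\<dots> = max (vdeg z) (vdeg w)"
    using z w by (simp add: vdeg_Fract inner_degree_mult)
  finally show ?thesis .
qed

lemma vdeg_const: "vdeg (Fract [:[:c:]:] 1) = 0"
  by (simp add: vdeg_Fract inner_degree_const)


definition deg_le :: "int \<Rightarrow> 'a::idom poly poly fract \<Rightarrow> bool" where
  "deg_le k z \<longleftrightarrow> z = 0 \<or> vdeg z \<le> k"

lemma deg_le_0 [simp]: "deg_le k 0"
  by (simp add: deg_le_def)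

lemma deg_le_one: "deg_le 0 1"
  by (simp add: deg_le_def)

lemma deg_le_mono: "deg_le j z \<Longrightarrow> j \<le> k \<Longrightarrow> deg_le k z"
  by (auto simp: deg_le_def)

lemma deg_le_add: "deg_le k z \<Longrightarrow> deg_le k w \<Longrightarrow> deg_le k (z + w)"
  unfolding deg_le_def using vdeg_add[of z w] by fastforce

lemma deg_le_uminus: "deg_le k z \<Longrightarrow> deg_le k (- z)"
  by (simp add: deg_le_def vdeg_uminus)

lemma deg_le_diff: "deg_le k z \<Longrightarrow> deg_le k w \<Longrightarrow> deg_le k (z - w)"
  using deg_le_add[of k z "- w"] deg_le_uminus[of k w] by simp

lemma deg_le_mult: "deg_le j z \<Longrightarrow> deg_le k w \<Longrightarrow> deg_le (j + k) (z * w)"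
  unfolding deg_le_def using vdeg_mult[of z w] by (cases "z = 0"; cases "w = 0") auto

lemma deg_le_power: "deg_le k z \<Longrightarrow> deg_le (int n * k) (z ^ n)"
  unfolding deg_le_def by (cases "z = 0") (auto simp: vdeg_power power_0_left mult_left_mono)

lemma deg_le_inverse: "z \<noteq> 0 \<Longrightarrow> deg_le (- vdeg z) (inverse z)"
  by (simp add: deg_le_def vdeg_inverse)


lemma of_int_fract: "of_int k = Fract (of_int k) 1"
  by (cases k rule: int_cases2) (simp_all add: of_nat_fract)


(* From now on we work in Q(a,b) = Qab, where vdeg is the degree in b.  Rational constants
   and the variable a have degree 0, the variable b has degree 1. *)
lemma of_rat_Qab: "(of_rat r :: Qab) = Fract [:[:r:]:] 1"
proof (cases r)
  case (Fract a b)
  then have r: "r = of_int a / of_int b" "b \<noteq> 0"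
    by (simp_all add: Fract_of_int_quotient)
  have "(of_rat r :: Qab) = Fract [:[:of_int a:]:] 1 / Fract [:[:of_int b:]:] 1"
    using r by (simp add: of_rat_divide of_int_fract of_int_poly)
  also have "\<dots> = Fract [:[:r:]:] 1"
    using r by (simp add: eq_fract(1))
  finally show ?thesis .
qed

lemma vdeg_of_rat: "vdeg (of_rat r :: Qab) = 0"
  by (simp add: of_rat_Qab vdeg_const)

lemma deg_le_of_rat: "deg_le 0 (of_rat r :: Qab)"
  by (simp add: deg_le_def vdeg_of_rat)

lemma deg_le_numeral: "deg_le 0 (numeral n :: Qab)"
  using deg_le_of_rat[of "numeral n"] by simp

lemma deg_le_var_a: "deg_le 0 var_a"
  by (simp add: deg_le_def var_a_def vdeg_Fract inner_degree_outer_var[simplified])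

lemma var_b_nonzero: "var_b \<noteq> 0"
  by (simp add: var_b_def Zero_fract_def eq_fract(1))

lemma vdeg_var_b: "vdeg var_b = 1"
  by (simp add: var_b_def vdeg_Fract inner_degree_inner_var[simplified])

lemma deg_le_var_b_power: "deg_le (int k) (var_b ^ k)"
  using deg_le_power[of 1 var_b k] by (simp add: deg_le_def vdeg_var_b)

lemmas deg_le_0_intros =
  deg_le_add[where k = 0] deg_le_diff[where k = 0] deg_le_uminus[where k = 0]
  deg_le_mult[where j = 0 and k = 0, simplified] deg_le_power[where k = 0, simplified]
  deg_le_numeral deg_le_one deg_le_var_a


definition lead :: "rat \<Rightarrow> nat \<Rightarrow> Qab \<Rightarrow> bool" where
  "lead c k z \<longleftrightarrow> deg_le (int k - 1) (z - of_rat c * var_b ^ k)"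

lemma deg_le_monomial: "deg_le (int k) (of_rat c * var_b ^ k)"
  using deg_le_mult[OF deg_le_of_rat deg_le_var_b_power] by simp

lemma vdeg_monomial: "c \<noteq> 0 \<Longrightarrow> vdeg (of_rat c * var_b ^ k) = int k"
  by (simp add: vdeg_mult vdeg_power vdeg_of_rat vdeg_var_b var_b_nonzero)

lemma lead_deg_le: "lead c k z \<Longrightarrow> deg_le (int k) z"
proof -
  assume "lead c k z"
  then have "deg_le (int k) (z - of_rat c * var_b ^ k)"
    unfolding lead_def by (rule deg_le_mono) simp
  from deg_le_add[OF this deg_le_monomial[of k c]] show ?thesis by simp
qed

lemma lead_numeral: "lead (numeral n) 0 (numeral n)"
  by (simp add: lead_def)

lemma lead_var_b: "lead 1 1 var_b"
  by (simp add: lead_def)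

lemma lead_add: "lead c k z \<Longrightarrow> lead c' k w \<Longrightarrow> lead (c + c') k (z + w)"
  unfolding lead_def
  using deg_le_add[of "int k - 1" "z - of_rat c * var_b ^ k" "w - of_rat c' * var_b ^ k"]
  by (simp add: of_rat_add algebra_simps)

lemma lead_uminus: "lead c k z \<Longrightarrow> lead (- c) k (- z)"
  unfolding lead_def using deg_le_uminus[of "int k - 1" "z - of_rat c * var_b ^ k"]
  by (simp add: of_rat_minus algebra_simps)

lemma lead_diff: "lead c k z \<Longrightarrow> lead c' k w \<Longrightarrow> lead (c - c') k (z - w)"
  using lead_add[of c k z "- c'" "- w"] lead_uminus[of c' k w] by simp

lemma lead_perturb: "lead c k z \<Longrightarrow> deg_le (int k - 1) e \<Longrightarrow> lead c k (z + e)"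
  unfolding lead_def using deg_le_add[of "int k - 1" "z - of_rat c * var_b ^ k" e]
  by (simp add: algebra_simps)

lemma lead_perturb_diff: "lead c k z \<Longrightarrow> deg_le (int k - 1) e \<Longrightarrow> lead c k (z - e)"
  using lead_perturb[of c k z "- e"] deg_le_uminus[of _ e] by simp

lemma lead_mult: "lead c j z \<Longrightarrow> lead c' k w \<Longrightarrow> lead (c * c') (j + k) (z * w)"
proof -
  assume z: "lead c j z" and w: "lead c' k w"
  have split: "z * w - of_rat (c * c') * var_b ^ (j + k) =
      (z - of_rat c * var_b ^ j) * w + (of_rat c * var_b ^ j) * (w - of_rat c' * var_b ^ k)"
    by (simp add: of_rat_mult power_add algebra_simps)
  have "deg_le (int j - 1 + int k) ((z - of_rat c * var_b ^ j) * w)"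
    using deg_le_mult[OF z[unfolded lead_def] lead_deg_le[OF w]] .
  moreover have "deg_le (int j + (int k - 1)) ((of_rat c * var_b ^ j) * (w - of_rat c' * var_b ^ k))"
    using deg_le_mult[OF deg_le_monomial w[unfolded lead_def]] .
  ultimately show ?thesis
    unfolding lead_def split by (intro deg_le_add) (simp_all add: algebra_simps)
qed

lemma lead_power: "lead c k z \<Longrightarrow> lead (c ^ n) (n * k) (z ^ n)"
proof (induction n)
  case 0
  show ?case by (simp add: lead_def)
next
  case (Suc n)
  from lead_mult[OF Suc.prems Suc.IH[OF Suc.prems]] show ?case by simp
qed

lemma lead_nonzero:
  assumes "lead c k z" "c \<noteq> 0" shows "z \<noteq> 0" "vdeg z = int k"
proof -
  have "\<not> deg_le (int k - 1) z"
  proof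
    assume "deg_le (int k - 1) z"
    from deg_le_diff[OF this assms(1)[unfolded lead_def]]
    have "deg_le (int k - 1) (of_rat c * var_b ^ k)" by simp
    then show False
      using vdeg_monomial[OF assms(2)] assms(2) by (simp add: deg_le_def var_b_nonzero)
  qed
  then show "z \<noteq> 0" "vdeg z = int k"
    using lead_deg_le[OF assms(1)] by (auto simp: deg_le_def)
qed

lemma lead_unique: assumes "lead c k z" "lead c' k z" shows "c = c'"
proof (rule ccontr)
  assume "c \<noteq> c'"
  have "lead (c - c') k 0" using lead_diff[OF assms] by simp
  then show False using lead_nonzero[of "c - c'" k 0] \<open>c \<noteq> c'\<close> by simp
qed

lemma lead_divide:
  assumes z: "lead c j z" and w: "lead c' k w" and "c' \<noteq> 0" "k \<le> j"
  shows "lead (c / c') (j - k) (z / w)"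
proof -
  have w_nz: "w \<noteq> 0" "vdeg w = int k" using lead_nonzero[OF w \<open>c' \<noteq> 0\<close>] by auto
  have "lead (c / c' * c') (j - k + k) (of_rat (c / c') * var_b ^ (j - k) * w)"
    by (rule lead_mult[OF _ w]) (simp add: lead_def)
  then have "lead c j (of_rat (c / c') * var_b ^ (j - k) * w)"
    using \<open>c' \<noteq> 0\<close> \<open>k \<le> j\<close> by simp
  from lead_diff[OF z this]
  have num: "deg_le (int j - 1) (z - of_rat (c / c') * var_b ^ (j - k) * w)"
    by (simp add: lead_def)
  have "z / w - of_rat (c / c') * var_b ^ (j - k)
      = (z - of_rat (c / c') * var_b ^ (j - k) * w) * inverse w"
    using w_nz by (simp add: field_simps)
  moreover have "int j - 1 + - int k = int (j - k) - 1" using \<open>k \<le> j\<close> by simp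
  ultimately show ?thesis
    unfolding lead_def
    using deg_le_mult[OF num deg_le_inverse[OF w_nz(1)]] w_nz(2) by metis
qed


lemma ec_add_chord:
  "x1 \<noteq> x2 \<Longrightarrow> ec_add A B C (Pt x1 y1) (Pt x2 y2) =
     (let l = (y2 - y1) / (x2 - x1); x3 = l^2 - A - x1 - x2 in Pt x3 (- (l * (x3 - x1) + y1)))"
  by simp

lemma ec_add_tangent:
  "y \<noteq> - y \<Longrightarrow> ec_add A B C (Pt x y) (Pt x y) =
     (let l = (3 * x^2 + 2 * A * x + B) / (2 * y); x3 = l^2 - A - x - x
      in Pt x3 (- (l * (x3 - x) + y)))"
  by simp

(* P is near the cusp with parameter s: it is affine with x = 16 b^4 / s^2 + O(b^3) and
   y = 64 b^6 / s^3 + O(b^5), i.e. to leading order it is the point of the cuspidal cubic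
   y^2 = x^3 with x/y = s / (4 b^2). *)
definition near_cusp :: "rat \<Rightarrow> Qab ecpoint \<Rightarrow> bool" where
  "near_cusp s P \<longleftrightarrow> (\<exists>x y. P = Pt x y \<and> lead (16 / s^2) 4 x \<and> lead (64 / s^3) 6 y)"

lemma near_cusp_not_Infinity: "near_cusp s P \<Longrightarrow> P \<noteq> Infinity"
  by (auto simp: near_cusp_def)

lemma third_point_near_cusp:
  assumes A: "deg_le 3 A" and l: "lead m 2 l"
    and x1: "lead (16/s^2) 4 x1" and y1: "lead (64/s^3) 6 y1" and x2: "lead (16/t^2) 4 x2"
    and mx: "m^2 - 16/s^2 - 16/t^2 = 16/u^2"
    and my: "- (m * (16/u^2 - 16/s^2) + 64/s^3) = 64/u^3"
  defines "x3 \<equiv> l^2 - A - x1 - x2"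
  shows "near_cusp u (Pt x3 (- (l * (x3 - x1) + y1)))"
proof -
  have "lead (m^2) 4 (l^2)"
    using lead_power[OF l, of 2] by simp
  then have "lead (m^2) 4 (l^2 - A)"
    by (rule lead_perturb_diff) (simp add: A)
  then have "lead (m^2 - 16/s^2 - 16/t^2) 4 x3"
    unfolding x3_def by (intro lead_diff x1 x2)
  then have x3: "lead (16/u^2) 4 x3" by (simp only: mx)
  have "lead (m * (16/u^2 - 16/s^2)) 6 (l * (x3 - x1))"
    using lead_mult[OF l lead_diff[OF x3 x1]] by simp
  then have "lead (- (m * (16/u^2 - 16/s^2) + 64/s^3)) 6 (- (l * (x3 - x1) + y1))"
    by (intro lead_uminus lead_add y1)
  then have "lead (64/u^3) 6 (- (l * (x3 - x1) + y1))" by (simp only: my)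
  with x3 show ?thesis by (simp add: near_cusp_def)
qed

(* The chord identities on the cuspidal cubic: the slope of the chord through the points
   with parameters s and t, and the parameter s + t of the third point. *)
lemma chord_coefficients:
  fixes s t :: rat
  assumes "0 < s" "0 < t" "s \<noteq> t"
  defines "m \<equiv> 4 * (s^2 + s*t + t^2) / (s * t * (s + t))"
  shows "16/t^2 - 16/s^2 \<noteq> 0"
    and "(64/t^3 - 64/s^3) / (16/t^2 - 16/s^2) = m"
    and "m^2 - 16/s^2 - 16/t^2 = 16/(s + t)^2"
    and "- (m * (16/(s + t)^2 - 16/s^2) + 64/s^3) = 64/(s + t)^3"
proof -
  have nz: "s \<noteq> 0" "t \<noteq> 0" "s + t \<noteq> 0" using assms by auto
  have "s^2 \<noteq> t^2" using assms by (simp add: power2_eq_iff_nonneg)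
  then show den: "16/t^2 - 16/s^2 \<noteq> 0" using nz by (simp add: field_simps)
  have "m * (16/t^2 - 16/s^2) = 64/t^3 - 64/s^3"
    using nz unfolding m_def
    by (simp add: divide_simps) (simp add: algebra_simps power2_eq_square power3_eq_cube)
  then show "(64/t^3 - 64/s^3) / (16/t^2 - 16/s^2) = m"
    using den by (simp add: field_simps)
  show "m^2 - 16/s^2 - 16/t^2 = 16/(s + t)^2"
    using nz unfolding m_def
    by (simp add: divide_simps) (simp add: algebra_simps power2_eq_square)
  show "- (m * (16/(s + t)^2 - 16/s^2) + 64/s^3) = 64/(s + t)^3"
    using nz unfolding m_def
    by (simp add: divide_simps) (simp add: algebra_simps power2_eq_square power3_eq_cube)
qed

lemma chord_step:
  assumes A: "deg_le 3 A" and P: "near_cusp s P" and Q: "near_cusp t Q"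
    and "0 < s" "0 < t" "s \<noteq> t"
  shows "near_cusp (s + t) (ec_add A B C P Q)"
proof -
  obtain x1 y1 where P_eq: "P = Pt x1 y1"
    and x1: "lead (16/s^2) 4 x1" and y1: "lead (64/s^3) 6 y1"
    using P by (auto simp: near_cusp_def)
  obtain x2 y2 where Q_eq: "Q = Pt x2 y2"
    and x2: "lead (16/t^2) 4 x2" and y2: "lead (64/t^3) 6 y2"
    using Q by (auto simp: near_cusp_def)
  note coeffs = chord_coefficients[OF \<open>0 < s\<close> \<open>0 < t\<close> \<open>s \<noteq> t\<close>]
  have "x1 \<noteq> x2"
    using lead_unique[of "16/t^2" 4 x2 "16/s^2"] x1 x2 coeffs(1) by auto
  define l where "l = (y2 - y1) / (x2 - x1)"
  have "lead (4 * (s^2 + s*t + t^2) / (s * t * (s + t))) (6 - 4) l"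
    using lead_divide[OF lead_diff[OF y2 y1] lead_diff[OF x2 x1] coeffs(1)]
    unfolding coeffs(2) l_def by simp
  then have l: "lead (4 * (s^2 + s*t + t^2) / (s * t * (s + t))) 2 l" by simp
  show ?thesis
    unfolding P_eq Q_eq ec_add_chord[OF \<open>x1 \<noteq> x2\<close>] Let_def l_def[symmetric]
    by (rule third_point_near_cusp[OF A l x1 y1 x2 coeffs(3,4)])
qed

(* Tangent step: the parameter doubles.  Here B = O(b^6) is needed for the slope. *)
lemma tangent_step:
  assumes A: "deg_le 3 A" and B: "deg_le 6 B" and P: "near_cusp s P" and "0 < s"
  shows "near_cusp (2 * s) (ec_add A B C P P)"
proof -
  obtain x y where P_eq: "P = Pt x y"
    and x: "lead (16/s^2) 4 x" and y: "lead (64/s^3) 6 y"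
    using P by (auto simp: near_cusp_def)
  have "y \<noteq> 0" using lead_nonzero(1)[OF y] \<open>0 < s\<close> by simp
  then have "y \<noteq> - y" by simp
  define l where "l = (3 * x^2 + 2 * A * x + B) / (2 * y)"
  have "lead (3 * (16/s^2)^2) 8 (3 * x^2)"
    using lead_mult[OF lead_numeral lead_power[OF x, of 2]] by simp
  moreover have "deg_le 7 (2 * A * x)"
    using deg_le_mult[OF deg_le_mult[OF deg_le_numeral A] lead_deg_le[OF x]] by simp
  moreover have "deg_le 7 B" by (rule deg_le_mono[OF B]) simp
  ultimately have num: "lead (3 * (16/s^2)^2) 8 (3 * x^2 + 2 * A * x + B)"
    by (auto intro!: lead_perturb)
  have "lead (2 * (64/s^3)) (0 + 6) (2 * y)"
    by (rule lead_mult[OF lead_numeral y])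
  then have den: "lead (2 * (64/s^3)) 6 (2 * y)" by simp
  have l: "lead (6 / s) 2 l"
    using lead_divide[OF num den] \<open>0 < s\<close> unfolding l_def
    by (simp add: power2_eq_square power3_eq_cube)
  have mx: "(6/s)^2 - 16/s^2 - 16/s^2 = 16/(2*s)^2"
    using \<open>0 < s\<close> by (simp add: divide_simps)
  have my: "- (6/s * (16/(2*s)^2 - 16/s^2) + 64/s^3) = 64/(2*s)^3"
    using \<open>0 < s\<close> by (simp add: divide_simps) (simp add: power2_eq_square power3_eq_cube)
  show ?thesis
    unfolding P_eq ec_add_tangent[OF \<open>y \<noteq> - y\<close>] Let_def l_def[symmetric]
    by (rule third_point_near_cusp[OF A l x y x mx my])
qed

(* If P is near the cusp with parameter 1, then n P is near the cusp with parameter n: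
   2 P = P + P is a tangent step, (n + 1) P = P + n P for n >= 2 a chord step. *)
lemma multiples_near_cusp:
  assumes A: "deg_le 3 A" and B: "deg_le 6 B" and P: "near_cusp 1 P" and "n \<ge> 1"
  shows "near_cusp (of_nat n) (ec_mult A B C n P)"
  using \<open>n \<ge> 1\<close>
proof (induction n rule: dec_induct)
  case base
  then show ?case using P by (auto simp: near_cusp_def)
next
  case (step n)
  show ?case
  proof (cases "n = 1")
    case True
    then have "ec_mult A B C (Suc n) P = ec_add A B C P P"
      using P by (auto simp: near_cusp_def)
    then show ?thesis using tangent_step[OF A B P] \<open>n = 1\<close> by simp
  next
    case False
    then have "(1::rat) \<noteq> of_nat n" "(0::rat) < of_nat n" using step.hyps by auto
    then show ?thesis using chord_step[OF A P step.IH] by (simp add: add.commute)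
  qed
qed


(* P0 lies on E_{a,b}; this is a polynomial identity, valid over any field. *)
lemma P0_on_curve:
  fixes a b :: "'f::field"
  shows "on_curve (EA a b) (EB a b) (EC a b) (Pt (-4 * dd a b * b) (4 * (dd a b)^2))"
proof -
  define d where "d = dd a b"
  have "(-4 * d * b)^3 + EA a b * (-4 * d * b)^2 + EB a b * (-4 * d * b) + EC a b
       = 16 * d^3 * dd a b"
    unfolding EA_def EB_def EC_def dd_def d_def by algebra
  then show ?thesis
    by (simp add: on_curve_def d_def power2_eq_square power3_eq_cube)
qed

lemma lead_dd: "lead (-4) 3 (dd var_a var_b)"
proof -
  define a where "a = var_a"
  define b where "b = var_b"
  have "lead (- 4 * 1 ^ 3) (0 + 3 * 1) (- 4 * b^3)"
    unfolding b_def by (rule lead_mult[OF lead_uminus[OF lead_numeral] lead_power[OF lead_var_b]])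
  then have "lead (-4) 3 (-4 * b^3)" by simp
  moreover have "deg_le 2 ((a^2 - 30*a + 1) * b^2 + 2*a*(3*a+1)*(4*a-7)*b
                          - a*(4*a^4 - 4*a^3 - 40*a^2 + 91*a - 4))"
  proof (intro deg_le_add deg_le_diff)
    have "deg_le 0 (a^2 - 30*a + 1)" unfolding a_def by (intro deg_le_0_intros)
    from deg_le_mult[OF this deg_le_var_b_power[of 2]]
    show "deg_le 2 ((a^2 - 30*a + 1) * b^2)" by (simp add: b_def)
    have "deg_le 0 (2*a*(3*a+1)*(4*a-7))" unfolding a_def by (intro deg_le_0_intros)
    from deg_le_mult[OF this deg_le_var_b_power[of 1]]
    show "deg_le 2 (2*a*(3*a+1)*(4*a-7)*b)" by (simp add: b_def deg_le_mono)
    have "deg_le 0 (a*(4*a^4 - 4*a^3 - 40*a^2 + 91*a - 4))"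
      unfolding a_def by (intro deg_le_0_intros)
    then show "deg_le 2 (a*(4*a^4 - 4*a^3 - 40*a^2 + 91*a - 4))" by (rule deg_le_mono) simp
  qed
  ultimately have "lead (-4) 3 (-4 * b^3 + ((a^2 - 30*a + 1) * b^2 + 2*a*(3*a+1)*(4*a-7)*b
                          - a*(4*a^4 - 4*a^3 - 40*a^2 + 91*a - 4)))"
    by (intro lead_perturb) simp_all
  moreover have "dd a b = -4 * b^3 + ((a^2 - 30*a + 1) * b^2 + 2*a*(3*a+1)*(4*a-7)*b
                          - a*(4*a^4 - 4*a^3 - 40*a^2 + 91*a - 4))"
    unfolding dd_def by (simp add: algebra_simps)
  ultimately show ?thesis by (simp add: a_def b_def)
qed

lemma EA_deg_le: "deg_le 3 (EA var_a var_b)"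
proof -
  have "deg_le 0 (var_a^2 - 30 * var_a + 1)" by (intro deg_le_0_intros)
  from deg_le_mult[OF lead_deg_le[OF lead_dd] this] show ?thesis by (simp add: EA_def)
qed

lemma EB_deg_le: "deg_le 6 (EB var_a var_b)"
proof -
  have "deg_le 0 (- 8 * var_a * (3 * var_a + 1) * (4 * var_a - 7))"
    by (intro deg_le_0_intros)
  from deg_le_mult[OF deg_le_power[OF lead_deg_le[OF lead_dd], of 2] this]
  have "deg_le 6 ((dd var_a var_b)^2 * (- 8 * var_a * (3 * var_a + 1) * (4 * var_a - 7)))"
    by simp
  then show ?thesis by (simp add: EB_def algebra_simps)
qed

lemma P0_near_cusp: "near_cusp 1 (Pt (-4 * dd var_a var_b * var_b) (4 * (dd var_a var_b)^2))"
proof -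
  have "lead (- 4 * - 4 * 1) (0 + 3 + 1) (-4 * dd var_a var_b * var_b)"
    by (rule lead_mult[OF lead_mult[OF lead_uminus[OF lead_numeral] lead_dd] lead_var_b])
  moreover have "lead (4 * (- 4)^2) (0 + 2 * 3) (4 * (dd var_a var_b)^2)"
    by (rule lead_mult[OF lead_numeral lead_power[OF lead_dd]])
  ultimately show ?thesis by (simp add: near_cusp_def)
qed

theorem mainTheorem6:
  fixes a b d :: Qab and P0 :: "Qab ecpoint"
  assumes "a = var_a" and "b = var_b" and "d = dd a b"
    and "P0 = Pt (-4 * d * b) (4 * d^2)"
  shows "on_curve (EA a b) (EB a b) (EC a b) P0
         \<and> (\<forall>n::nat. n \<ge> 1 \<longrightarrow> ec_mult (EA a b) (EB a b) (EC a b) n P0 \<noteq> Infinity)"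
proof (intro conjI allI impI)
  have P0: "P0 = Pt (-4 * dd var_a var_b * var_b) (4 * (dd var_a var_b)^2)"
    using assms by simp
  show "on_curve (EA a b) (EB a b) (EC a b) P0"
    unfolding P0 assms(1,2) by (rule P0_on_curve)
  fix n :: nat
  assume "n \<ge> 1"
  have "near_cusp (of_nat n) (ec_mult (EA a b) (EB a b) (EC a b) n P0)"
    unfolding P0 assms(1,2)
    by (rule multiples_near_cusp[OF EA_deg_le EB_deg_le P0_near_cusp \<open>n \<ge> 1\<close>])
  then show "ec_mult (EA a b) (EB a b) (EC a b) n P0 \<noteq> Infinity"
    by (rule near_cusp_not_Infinity)
qed

end
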